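(* Let $f:\mathbb{R}\to\mathbb{C}$ be a Lebesgue measurable function which is not zero almost everywhere, has faster than exponential decay, i.e. $\lim_{x\to\infty}|f(x)|e^{cx}=0$ for every $c>0$, and is quasi-monotone, i.e. for every $b>0$ there exists $C=C(b)>0$ such that $|f(x+b)|<C|f(x)|$ for all $x>0$. Then $\mathcal G(f,\mathbb{R}^2)$ is linearly independent.
   Context: For $a,b\in\mathbb{R}$, $M_aT_bf(x)=e^{2\pi i a x}f(x-b)$, and $\mathcal G(f,\mathbb{R}^2)=\{M_aT_bf:a,b\in\mathbb{R}\}$. Measurable functions equal a.e. are identified; $\mathcal G(f,\mathbb{R}^2)$ is linearly independent if every finite linear combination $\sum c_{(a,b)}M_aT_bf$ over distinct pairs $(a,b)$ with coefficients not all zero is not zero almost everywhere. *)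

theory Defs
  imports "HOL-Analysis.Analysis"
begin

definition MT :: "real \<Rightarrow> real \<Rightarrow> (real \<Rightarrow> complex) \<Rightarrow> real \<Rightarrow> complex" where
  "MT a b f x = exp (2 * pi * \<i> * complex_of_real (a * x)) * f (x - b)"

text \<open>G(f,R^2) is linearly independent (functions identified a.e. w.r.t. Lebesgue measure):
  every finite linear combination over distinct pairs (a,b) that vanishes a.e. has all
  coefficients zero.\<close>
definition gabor_lin_indep :: "(real \<Rightarrow> complex) \<Rightarrow> bool" where
  "gabor_lin_indep f \<longleftrightarrow>
     (\<forall>S c. finite (S :: (real \<times> real) set) \<longrightarrow>
        (AE x in lebesgue. (\<Sum>p\<in>S. c p * MT (fst p) (snd p) f x) = 0) \<longrightarrow>
        (\<forall>p\<in>S. c p = (0::complex)))"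

end

theory Submission
  imports Defs "HOL-Library.Real_Mod" "HOL-Real_Asymp.Real_Asymp"
begin

text \<open>Suppose a finite combination of time-frequency shifts vanishes a.e.\ with some nonzero
  coefficient. Grouping the terms with the largest shift \<open>b\<close> gives, almost everywhere,
  \<open>|Q x| |f (x - b)| \<le> \<Sum>\<^sub>i \<kappa>\<^sub>i |f (x - \<beta>\<^sub>i)|\<close> with all \<open>\<beta>\<^sub>i < b\<close>, where \<open>Q\<close> is a trigonometric polynomial
  with distinct frequencies and nonzero coefficients. Such a \<open>Q\<close> is bounded away from zero
  somewhere in every interval of a fixed length, hence, by uniform continuity, at one of finitely
  many steps \<open>s \<in> [d/4, d/2]\<close> after any point. Quasi-monotonicity bounds each \<open>|f (x - \<beta>\<^sub>i)|\<close> by a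
  multiple of \<open>|f (x + s - b)|\<close>, so along a chain of such steps, chosen to avoid the exceptional
  null set, \<open>|f|\<close> grows at least geometrically while the points move to \<open>+\<infinity>\<close> at linear speed.
  This contradicts faster than exponential decay.\<close>

definition trig_poly :: "(real \<Rightarrow> complex) \<Rightarrow> real set \<Rightarrow> real \<Rightarrow> complex" where
  "trig_poly w A t = (\<Sum>a\<in>A. w a * cis (2 * pi * a * t))"

lemma MT_conv_cis: "MT a b f x = cis (2 * pi * a * x) * f (x - b)"
  by (simp add: MT_def cis_conv_exp mult_ac)

lemma norm_cis_diff_le: "norm (cis x - cis y) \<le> \<bar>x - y\<bar>"
proof -
  have "(norm (cis x - cis y))\<^sup>2 = (cos x - cos y)\<^sup>2 + (sin x - sin y)\<^sup>2"
    by (simp add: cmod_def)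
  also have "\<dots> = 2 - 2 * cos (x - y)"
    by (simp add: power2_eq_square cos_diff algebra_simps)
  also have "\<dots> = 4 * (sin ((x - y) / 2))\<^sup>2"
  proof -
    have "x - y = 2 * ((x - y) / 2)"
      by simp
    then have "cos (x - y) = cos (2 * ((x - y) / 2))"
      by (rule arg_cong)
    also have "\<dots> = 1 - 2 * (sin ((x - y) / 2))\<^sup>2"
      by (rule cos_double_sin)
    finally show ?thesis
      by simp
  qed
  also have "\<dots> \<le> 4 * ((x - y) / 2)\<^sup>2"
    using abs_sin_x_le_abs_x abs_le_square_iff by (metis mult_left_mono zero_le_numeral)
  also have "\<dots> = \<bar>x - y\<bar>\<^sup>2"
    by (simp add: power2_eq_square)
  finally show ?thesis
    by (rule power2_le_imp_le) simp
qed

lemma cis_neq_if_dist_lt_2pi: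
  assumes "x \<noteq> y" "\<bar>x - y\<bar> < 2 * pi"
  shows "cis x \<noteq> cis y"
  using assms rcong_imp_eq[of x y "2 * pi"] by (auto simp: cis_eq_iff)

lemma uniformly_continuous_trig_poly: "uniformly_continuous_on UNIV (trig_poly w A)"
  unfolding trig_poly_def
proof (intro uniformly_continuous_on_sum uniformly_continuous_on_cmul_left)
  fix a :: real
  have "1-lipschitz_on X cis" for X
    by (rule lipschitz_onI) (simp_all add: dist_norm norm_cis_diff_le)
  then have "uniformly_continuous_on X cis" for X
    by (rule lipschitz_on_uniformly_continuous)
  moreover have "uniformly_continuous_on UNIV (\<lambda>t::real. (2 * pi * a) *\<^sub>R t)"
    by (intro uniformly_continuous_on_cmul uniformly_continuous_on_id)
  ultimately show "uniformly_continuous_on UNIV (\<lambda>t. cis (2 * pi * a * t))"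
    using uniformly_continuous_on_compose[of UNIV "\<lambda>t::real. (2 * pi * a) *\<^sub>R t" cis]
    by simp
qed

lemma trig_poly_shift_difference:
  assumes "finite A" "a0 \<notin> A"
  shows "trig_poly w (insert a0 A) (t + h) - cis (2 * pi * a0 * h) * trig_poly w (insert a0 A) t
       = trig_poly (\<lambda>a. w a * (cis (2 * pi * a * h) - cis (2 * pi * a0 * h))) A t"
proof -
  have "trig_poly w (insert a0 A) (t + h) - cis (2 * pi * a0 * h) * trig_poly w (insert a0 A) t
      = (\<Sum>a\<in>insert a0 A. w a * (cis (2 * pi * a * h) - cis (2 * pi * a0 * h)) * cis (2 * pi * a * t))"
    by (simp add: trig_poly_def sum_distrib_left sum_subtractf[symmetric] cis_mult algebra_simps)
  also have "\<dots> = trig_poly (\<lambda>a. w a * (cis (2 * pi * a * h) - cis (2 * pi * a0 * h))) A t"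
    using assms by (simp add: trig_poly_def)
  finally show ?thesis .
qed

lemma exists_step_separating_frequencies:
  assumes "finite A" "a0 \<notin> A" "L > 0"
  obtains h where "0 < h" "h \<le> L" "\<forall>a\<in>A. cis (2 * pi * a * h) \<noteq> cis (2 * pi * a0 * h)"
proof
  define M where "M = (\<Sum>a\<in>A. \<bar>a - a0\<bar>)"
  define h where "h = min L (1 / (M + 1))"
  have M0: "M \<ge> 0"
    by (simp add: M_def sum_nonneg)
  show h0: "0 < h" "h \<le> L"
    using \<open>L > 0\<close> M0 by (auto simp: h_def)
  show "\<forall>a\<in>A. cis (2 * pi * a * h) \<noteq> cis (2 * pi * a0 * h)"
  proof
    fix a assume a: "a \<in> A"
    then have "a \<noteq> a0"
      using assms(2) by auto
    have "\<bar>a - a0\<bar> \<le> M"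
      unfolding M_def using a assms(1) by (intro member_le_sum) auto
    moreover have "h \<le> 1 / (M + 1)"
      by (simp add: h_def)
    ultimately have "\<bar>a - a0\<bar> * h \<le> M * (1 / (M + 1))"
      using h0 M0 by (intro mult_mono) auto
    also have "\<dots> < 1"
      using M0 by simp
    finally have "\<bar>a - a0\<bar> * h < 1" .
    moreover have "\<bar>2 * pi * a * h - 2 * pi * a0 * h\<bar> = 2 * pi * (\<bar>a - a0\<bar> * h)"
      using h0 by (simp add: abs_mult flip: left_diff_distrib right_diff_distrib)
    ultimately have "\<bar>2 * pi * a * h - 2 * pi * a0 * h\<bar> < 2 * pi"
      by simp
    moreover have "2 * pi * a * h \<noteq> 2 * pi * a0 * h"
      using h0 \<open>a \<noteq> a0\<close> by simp
    ultimately show "cis (2 * pi * a * h) \<noteq> cis (2 * pi * a0 * h)"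
      by (intro cis_neq_if_dist_lt_2pi)
  qed
qed

lemma trig_poly_large_in_every_interval:
  assumes "finite A" "A \<noteq> {}" "\<forall>a\<in>A. w a \<noteq> 0" "L > 0"
  shows "\<exists>\<eta>>0. \<forall>u. \<exists>t\<in>{u..u + L}. \<eta> \<le> norm (trig_poly w A t)"
  using assms
proof (induction A arbitrary: w L rule: finite_ne_induct)
  case (singleton a)
  then show ?case
    by (intro exI[of _ "norm (w a)"]) (force simp: trig_poly_def norm_mult)
next
  case (insert a0 A)
  obtain h where h: "0 < h" "h \<le> L / 2" and sep: "\<forall>a\<in>A. cis (2 * pi * a * h) \<noteq> cis (2 * pi * a0 * h)"
    using exists_step_separating_frequencies[of A a0 "L / 2"] insert.hyps insert.prems by auto
  \<comment> \<open>The difference \<open>R (t + h) - cis (2 * pi * a0 * h) * R t\<close> cancels the frequency \<open>a0\<close>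
    and, by the choice of \<open>h\<close>, keeps all other coefficients nonzero.\<close>
  define w' where "w' a = w a * (cis (2 * pi * a * h) - cis (2 * pi * a0 * h))" for a
  define R where "R = trig_poly w (insert a0 A)"
  have R_diff: "trig_poly w' A t = R (t + h) - cis (2 * pi * a0 * h) * R t" for t
    unfolding R_def w'_def using insert.hyps by (simp add: trig_poly_shift_difference)
  have "\<forall>a\<in>A. w' a \<noteq> 0"
    using insert.prems sep by (auto simp: w'_def)
  then obtain \<eta> where "\<eta> > 0" and \<eta>: "\<forall>u. \<exists>t\<in>{u..u + L / 2}. \<eta> \<le> norm (trig_poly w' A t)"
    using insert.IH[of w' "L / 2"] insert.prems by auto
  have "\<exists>t\<in>{u..u + L}. \<eta> / 2 \<le> norm (R t)" for u
  proof -
    obtain t where t: "t \<in> {u..u + L / 2}" "\<eta> \<le> norm (trig_poly w' A t)"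
      using \<eta> by blast
    then have "\<eta> \<le> norm (R (t + h)) + norm (R t)"
      using norm_triangle_ineq4[of "R (t + h)" "cis (2 * pi * a0 * h) * R t"]
      by (simp add: R_diff norm_mult)
    then consider "\<eta> / 2 \<le> norm (R (t + h))" | "\<eta> / 2 \<le> norm (R t)"
      by linarith
    then show ?thesis
    proof cases
      case 1
      then show ?thesis
        using t h by (intro bexI[of _ "t + h"]) auto
    next
      case 2
      then show ?thesis
        using t h by (intro bexI[of _ t]) auto
    qed
  qed
  then show ?case
    using \<open>\<eta> > 0\<close> unfolding R_def by (intro exI[of _ "\<eta> / 2"]) auto
qed

lemma finite_steps_to_large_values:
  fixes Q :: "real \<Rightarrow> 'a::real_normed_vector"
  assumes uc: "uniformly_continuous_on UNIV Q" and "L > 0" "\<eta> > 0"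
    and large: "\<forall>u. \<exists>t\<in>{u..u + L}. \<eta> \<le> norm (Q t)"
  obtains St where "finite St" "St \<subseteq> {L..2 * L}" "\<forall>x. \<exists>s\<in>St. \<eta> / 2 \<le> norm (Q (x + s))"
proof -
  obtain \<delta> where "\<delta> > 0" and \<delta>: "\<And>t s. dist t s < \<delta> \<Longrightarrow> dist (Q t) (Q s) < \<eta> / 2"
    using uc \<open>\<eta> > 0\<close> unfolding uniformly_continuous_on_def by (metis half_gt_zero iso_tuple_UNIV_I)
  obtain n :: nat where "L / \<delta> < n"
    using reals_Archimedean2 by blast
  define h where "h = L / n"
  have "n > 0"
    using \<open>L / \<delta> < n\<close> \<open>\<delta> > 0\<close> \<open>L > 0\<close> by (cases n) (auto simp: field_simps)
  then have "h > 0" "h < \<delta>"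
    using \<open>L / \<delta> < n\<close> \<open>\<delta> > 0\<close> \<open>L > 0\<close> by (auto simp: h_def field_simps)
  define St where "St = (\<lambda>i. L + real i * h) ` {..n}"
  have "finite St"
    by (simp add: St_def)
  moreover have "St \<subseteq> {L..2 * L}"
    using \<open>h > 0\<close> \<open>n > 0\<close> by (auto simp: St_def h_def field_simps)
  moreover have "\<forall>x. \<exists>s\<in>St. \<eta> / 2 \<le> norm (Q (x + s))"
  proof
    fix x
    obtain t where t: "t \<in> {x + L..x + 2 * L}" "\<eta> \<le> norm (Q t)"
      using large by (metis add.assoc mult_2)
    define i where "i = nat \<lfloor>(t - x - L) / h\<rfloor>"
    have i_le: "real i \<le> (t - x - L) / h" and "(t - x - L) / h < real i + 1"
      using t \<open>h > 0\<close> by (auto simp: i_def)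
    then have i: "real i * h \<le> t - x - L" "t - x - L < real i * h + h"
      using \<open>h > 0\<close> by (simp_all add: field_simps)
    have "(t - x - L) / h \<le> L / h"
      using t \<open>h > 0\<close> by (intro divide_right_mono) auto
    also have "L / h = n"
      using \<open>n > 0\<close> \<open>L > 0\<close> by (simp add: h_def)
    finally have "i \<le> n"
      using i_le by linarith
    then have "L + real i * h \<in> St"
      unfolding St_def by (intro imageI) simp
    moreover have "dist t (x + (L + real i * h)) < \<delta>"
      using i \<open>h < \<delta>\<close> by (simp add: dist_real_def)
    then have "norm (Q t - Q (x + (L + real i * h))) < \<eta> / 2"
      using \<delta> by (simp add: dist_norm)
    then have "\<eta> / 2 \<le> norm (Q (x + (L + real i * h)))"
      using t(2) norm_triangle_ineq2[of "Q t" "Q (x + (L + real i * h))"] by linarith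
    ultimately show "\<exists>s\<in>St. \<eta> / 2 \<le> norm (Q (x + s))"
      by blast
  qed
  ultimately show ?thesis
    using that by blast
qed

lemma chain_avoiding_null_set:
  fixes N St :: "real set"
  assumes N: "N \<in> null_sets lebesgue" and "countable St" "St \<subseteq> {0..}"
    and P: "\<forall>x. \<exists>s\<in>St. P (x + s)"
  obtains y :: "nat \<Rightarrow> real"
    where "a \<le> y 0" "\<And>k. y (Suc k) - y k \<in> St" "\<And>k. y k \<notin> N" "\<And>k. P (y k)"
proof -
  \<comment> \<open>Each chain member differs from \<open>x0\<close> by a finite sum of steps, so starting outside
    \<open>B\<close> keeps the whole chain outside \<open>N\<close>.\<close>
  define Sums where "Sums = sum_list ` lists St"
  define B where "B = (\<Union>z\<in>Sums. (+) (- z) ` N)"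
  have "negligible ((+) (- z) ` N)" for z
    using N by (intro negligible_translation) (simp add: negligible_iff_null_sets)
  then have "negligible B"
    unfolding B_def Sums_def using \<open>countable St\<close>
    by (intro negligible_countable_Union countable_image countable_lists) auto
  moreover have "\<not> negligible {a..a + 1}"
    using negligible_interval(1)[of a "a + 1"] by simp
  ultimately obtain x0 where "a \<le> x0" "x0 \<notin> B"
    by (metis atLeastAtMost_iff negligible_subset subsetI)
  have "\<forall>x. \<exists>z. z - x \<in> St \<and> P z"
    using P by (metis add_diff_cancel_left')
  then obtain nxt where nxt: "\<And>x. nxt x - x \<in> St" "\<And>x. P (nxt x)"
    by metis
  define y where "y k = (nxt ^^ Suc k) x0" for k
  have y_Suc: "y (Suc k) = nxt (y k)" for k
    by (simp add: y_def)
  have "y k - x0 \<in> Sums" for k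
  proof (induction k)
    case 0
    then show ?case
      using nxt(1)[of x0] unfolding Sums_def y_def by (intro image_eqI[of _ _ "[nxt x0 - x0]"]) auto
  next
    case (Suc k)
    then obtain zs where "set zs \<subseteq> St" "y k - x0 = sum_list zs"
      by (auto simp: Sums_def)
    then show ?case
      using nxt(1)[of "y k"] unfolding Sums_def y_Suc
      by (intro image_eqI[of _ _ "zs @ [nxt (y k) - y k]"]) auto
  qed
  then have "y k \<notin> N" for k
    using \<open>x0 \<notin> B\<close> unfolding B_def by force
  moreover have "a \<le> y 0"
    using nxt(1)[of x0] \<open>a \<le> x0\<close> \<open>St \<subseteq> {0..}\<close> by (auto simp: y_def)
  moreover have "P (y k)" for k
    using nxt(2) by (simp add: y_def)
  ultimately show ?thesis
    using that nxt(1) y_Suc by metis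
qed

lemma quasi_monotone_nonzero:
  fixes f :: "real \<Rightarrow> 'a::real_normed_vector"
  assumes "\<And>b. b > 0 \<Longrightarrow> \<exists>C>0. \<forall>x>0. norm (f (x + b)) < C * norm (f x)" "x > 0"
  shows "f x \<noteq> 0"
  using assms by force

lemma quasi_monotone_dominates_translates:
  fixes f :: "real \<Rightarrow> 'a::real_normed_vector" and \<beta> \<kappa> :: "'i \<Rightarrow> real"
  assumes quasi_mono: "\<And>b. b > 0 \<Longrightarrow> \<exists>C>0. \<forall>x>0. norm (f (x + b)) < C * norm (f x)"
    and "finite T" "finite St" and gap: "\<forall>i\<in>T. \<forall>s\<in>St. \<beta> i + s < b"
  obtains K where "K > 0"
    "\<And>x s. s \<in> St \<Longrightarrow> b < x + s \<Longrightarrow>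
       (\<Sum>i\<in>T. \<kappa> i * norm (f (x - \<beta> i))) \<le> K * norm (f (x + s - b))"
proof -
  obtain C where C: "\<And>b. b > 0 \<Longrightarrow> C b > 0" "\<And>b x. b > 0 \<Longrightarrow> x > 0 \<Longrightarrow> norm (f (x + b)) < C b * norm (f x)"
    using quasi_mono by metis
  define K where "K = (\<Sum>i\<in>T. \<Sum>s\<in>St. \<bar>\<kappa> i\<bar> * C (b - \<beta> i - s)) + 1"
  have K_terms: "0 \<le> \<bar>\<kappa> i\<bar> * C (b - \<beta> i - s)" if "i \<in> T" "s \<in> St" for i s
    using C(1)[of "b - \<beta> i - s"] gap that by fastforce
  have "K > 0"
    unfolding K_def using K_terms by (simp add: add_nonneg_pos sum_nonneg)
  moreover have "(\<Sum>i\<in>T. \<kappa> i * norm (f (x - \<beta> i))) \<le> K * norm (f (x + s - b))"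
    if s: "s \<in> St" and x: "b < x + s" for x s
  proof -
    have "\<kappa> i * norm (f (x - \<beta> i)) \<le> (\<Sum>s'\<in>St. \<bar>\<kappa> i\<bar> * C (b - \<beta> i - s')) * norm (f (x + s - b))"
      if i: "i \<in> T" for i
    proof -
      have "norm (f (x - \<beta> i)) = norm (f ((x + s - b) + (b - \<beta> i - s)))"
        by simp
      also have "\<dots> \<le> C (b - \<beta> i - s) * norm (f (x + s - b))"
        using C(2)[of "b - \<beta> i - s" "x + s - b"] gap i s x by fastforce
      finally have bound: "norm (f (x - \<beta> i)) \<le> C (b - \<beta> i - s) * norm (f (x + s - b))" .
      have "\<kappa> i * norm (f (x - \<beta> i)) \<le> \<bar>\<kappa> i\<bar> * norm (f (x - \<beta> i))"
        by (simp add: mult_right_mono)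
      also have "\<dots> \<le> \<bar>\<kappa> i\<bar> * C (b - \<beta> i - s) * norm (f (x + s - b))"
        using bound by (simp add: mult.assoc mult_left_mono)
      also have "\<dots> \<le> (\<Sum>s'\<in>St. \<bar>\<kappa> i\<bar> * C (b - \<beta> i - s')) * norm (f (x + s - b))"
        using K_terms i s \<open>finite St\<close> by (intro mult_right_mono member_le_sum) auto
      finally show ?thesis .
    qed
    then have "(\<Sum>i\<in>T. \<kappa> i * norm (f (x - \<beta> i)))
        \<le> (\<Sum>i\<in>T. \<Sum>s'\<in>St. \<bar>\<kappa> i\<bar> * C (b - \<beta> i - s')) * norm (f (x + s - b))"
      by (simp add: sum_distrib_right sum_mono)
    also have "\<dots> \<le> K * norm (f (x + s - b))"
      by (simp add: K_def mult_right_mono)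
    finally show ?thesis .
  qed
  ultimately show ?thesis
    using that by blast
qed

lemma superexponential_decay_excludes_geometric_growth:
  fixes f :: "real \<Rightarrow> 'a::real_normed_vector"
  assumes decay: "\<And>c. c > 0 \<Longrightarrow> ((\<lambda>x. norm (f x) * exp (c * x)) \<longlongrightarrow> 0) at_top"
    and "\<delta> > 0" "r > 0"
    and gaps: "\<And>k. y k + \<delta> \<le> y (Suc k)"
    and growth: "\<And>k. r * norm (f (y k)) \<le> norm (f (y (Suc k)))"
  shows "f (y 0) = 0"
proof -
  \<comment> \<open>Chosen so that \<open>r * exp (c * \<delta>) \<ge> 1\<close>, which makes \<open>\<phi>\<close> below nondecreasing.\<close>
  define c where "c = (\<bar>ln r\<bar> + 1) / \<delta>"
  have "c > 0"
    using \<open>\<delta> > 0\<close> by (simp add: c_def add_nonneg_pos)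
  have "1 \<le> r * exp (c * \<delta>)"
  proof -
    have "0 \<le> ln r + c * \<delta>"
      using \<open>\<delta> > 0\<close> by (simp add: c_def)
    then have "1 \<le> exp (ln r + c * \<delta>)"
      by simp
    then show ?thesis
      using \<open>r > 0\<close> by (simp add: exp_add)
  qed
  define \<phi> where "\<phi> k = norm (f (y k)) * exp (c * y k)" for k
  have "\<phi> 0 \<le> \<phi> k" for k
  proof (induction k)
    case (Suc k)
    have "\<phi> k \<le> r * exp (c * \<delta>) * \<phi> k"
      using mult_right_mono[OF \<open>1 \<le> r * exp (c * \<delta>)\<close>, of "\<phi> k"] by (simp add: \<phi>_def)
    also have "\<dots> = r * norm (f (y k)) * exp (c * (y k + \<delta>))"
      by (simp add: \<phi>_def exp_add distrib_left mult_ac)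
    also have "\<dots> \<le> \<phi> (Suc k)"
      unfolding \<phi>_def using growth[of k] gaps[of k] \<open>c > 0\<close> by (intro mult_mono) auto
    finally show ?case
      using Suc by simp
  qed simp
  moreover have "filterlim y at_top sequentially"
  proof (rule filterlim_at_top_mono)
    show "filterlim (\<lambda>k. y 0 + real k * \<delta>) at_top sequentially"
      using \<open>\<delta> > 0\<close> by real_asymp
    have "y 0 + real k * \<delta> \<le> y k" for k
    proof (induction k)
      case (Suc k)
      then show ?case
        using gaps[of k] by (simp add: algebra_simps)
    qed simp
    then show "\<forall>\<^sub>F k in sequentially. y 0 + real k * \<delta> \<le> y k"
      by simp
  qed
  then have "\<phi> \<longlonglongrightarrow> 0"
    unfolding \<phi>_def by (rule filterlim_compose[OF decay[OF \<open>c > 0\<close>]])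
  ultimately have "\<phi> 0 \<le> 0"
    by (intro LIMSEQ_le_const) auto
  then show ?thesis
    by (simp add: \<phi>_def mult_le_0_iff)
qed

lemma finite_uniform_gap_below:
  fixes \<beta> :: "'i \<Rightarrow> real"
  assumes "finite T" "\<forall>i\<in>T. \<beta> i < b"
  obtains d where "d > 0" "\<forall>i\<in>T. \<beta> i + d \<le> b"
proof (cases "T = {}")
  case False
  define d where "d = Min ((\<lambda>i. b - \<beta> i) ` T)"
  have "d > 0"
    using assms False Min_in[of "(\<lambda>i. b - \<beta> i) ` T"] by (auto simp: d_def)
  moreover have "d \<le> b - \<beta> i" if "i \<in> T" for i
    unfolding d_def using assms(1) that by (intro Min_le) auto
  ultimately show ?thesis
    using that by force
qed (use that[of 1] in auto)

lemma trig_poly_top_shift_not_dominated: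
  fixes f :: "real \<Rightarrow> 'a::real_normed_vector" and \<beta> \<kappa> :: "'i \<Rightarrow> real"
  assumes decay: "\<And>c. c > 0 \<Longrightarrow> ((\<lambda>x. norm (f x) * exp (c * x)) \<longlongrightarrow> 0) at_top"
    and quasi_mono: "\<And>b. b > 0 \<Longrightarrow> \<exists>C>0. \<forall>x>0. norm (f (x + b)) < C * norm (f x)"
    and "finite A" "A \<noteq> {}" "\<forall>a\<in>A. w a \<noteq> 0" "finite T" "\<forall>i\<in>T. \<beta> i < b"
    and dom: "AE x in lebesgue.
      norm (trig_poly w A x) * norm (f (x - b)) \<le> (\<Sum>i\<in>T. \<kappa> i * norm (f (x - \<beta> i)))"
  shows False
proof -
  let ?Q = "trig_poly w A"
  obtain N where N: "N \<in> null_sets lebesgue"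
    and dom_N: "\<And>x. x \<notin> N \<Longrightarrow> norm (?Q x) * norm (f (x - b)) \<le> (\<Sum>i\<in>T. \<kappa> i * norm (f (x - \<beta> i)))"
    using dom by (auto simp: eventually_ae_filter)
  obtain d where "d > 0" and gap: "\<forall>i\<in>T. \<beta> i + d \<le> b"
    using finite_uniform_gap_below[OF \<open>finite T\<close> \<open>\<forall>i\<in>T. \<beta> i < b\<close>] by blast
  have "d / 4 > 0"
    using \<open>d > 0\<close> by simp
  then obtain \<eta> where "\<eta> > 0" and large: "\<forall>u. \<exists>t\<in>{u..u + d / 4}. \<eta> \<le> norm (?Q t)"
    using trig_poly_large_in_every_interval[of A w "d / 4"] assms by auto
  obtain St where "finite St" and St_range: "St \<subseteq> {d / 4..2 * (d / 4)}" and good: "\<forall>x. \<exists>s\<in>St. \<eta> / 2 \<le> norm (?Q (x + s))"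
    by (rule finite_steps_to_large_values[OF uniformly_continuous_trig_poly \<open>d / 4 > 0\<close> \<open>\<eta> > 0\<close> large])
  then have gap_St: "\<forall>i\<in>T. \<forall>s\<in>St. \<beta> i + s < b"
    using gap \<open>d > 0\<close> by fastforce
  obtain K where "K > 0" and K: "\<And>x s. s \<in> St \<Longrightarrow> b < x + s \<Longrightarrow>
      (\<Sum>i\<in>T. \<kappa> i * norm (f (x - \<beta> i))) \<le> K * norm (f (x + s - b))"
    using quasi_monotone_dominates_translates[OF quasi_mono \<open>finite T\<close> \<open>finite St\<close> gap_St, of \<kappa>]
    by blast
  have "St \<subseteq> {0..}"
    using St_range \<open>d > 0\<close> by auto
  then obtain y where "b + 1 \<le> y 0" and y_step: "\<And>k. y (Suc k) - y k \<in> St"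
    and y_N: "\<And>k. y k \<notin> N" and y_large: "\<And>k. \<eta> / 2 \<le> norm (?Q (y k))"
    using chain_avoiding_null_set[OF N countable_finite[OF \<open>finite St\<close>],
        where P = "\<lambda>z. \<eta> / 2 \<le> norm (?Q z)" and a = "b + 1"] good by blast
  have "b < y k" for k
  proof (induction k)
    case (Suc k)
    then show ?case
      using y_step[of k] \<open>St \<subseteq> {0..}\<close> by force
  qed (use \<open>b + 1 \<le> y 0\<close> in simp)
  have "\<eta> / 2 * norm (f (y k - b)) \<le> K * norm (f (y (Suc k) - b))" for k
  proof -
    have "\<eta> / 2 * norm (f (y k - b)) \<le> norm (?Q (y k)) * norm (f (y k - b))"
      using y_large by (rule mult_right_mono) simp
    also have "\<dots> \<le> (\<Sum>i\<in>T. \<kappa> i * norm (f (y k - \<beta> i)))"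
      using y_N by (rule dom_N)
    also have "\<dots> \<le> K * norm (f (y k + (y (Suc k) - y k) - b))"
      using y_step \<open>b < y (Suc k)\<close> by (intro K) auto
    finally show ?thesis
      by simp
  qed
  then have "\<eta> / (2 * K) * norm (f (y k - b)) \<le> norm (f (y (Suc k) - b))" for k
    using \<open>K > 0\<close> by (simp add: field_simps)
  moreover have "y k - b + d / 4 \<le> y (Suc k) - b" for k
    using y_step[of k] St_range by auto
  ultimately have "f (y 0 - b) = 0"
    using superexponential_decay_excludes_geometric_growth[OF decay, of "d / 4" "\<eta> / (2 * K)" "\<lambda>k. y k - b"]
      \<open>d > 0\<close> \<open>\<eta> > 0\<close> \<open>K > 0\<close> by auto
  moreover have "f (y 0 - b) \<noteq> 0"
    using quasi_monotone_nonzero[OF quasi_mono] \<open>b + 1 \<le> y 0\<close> by auto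
  ultimately show False
    by contradiction
qed

lemma gabor_combination_top_shift_bound:
  fixes f :: "real \<Rightarrow> complex"
  assumes "finite S" and ae: "AE x in lebesgue. (\<Sum>q\<in>S. c q * MT (fst q) (snd q) f x) = 0"
    and "p \<in> S" "c p \<noteq> 0"
  obtains b A T where "finite A" "A \<noteq> {}" "\<forall>a\<in>A. c (a, b) \<noteq> 0" "finite T" "\<forall>q\<in>T. snd q < b"
    "AE x in lebesgue. norm (trig_poly (\<lambda>a. c (a, b)) A x) * norm (f (x - b))
       \<le> (\<Sum>q\<in>T. norm (c q) * norm (f (x - snd q)))"
proof -
  define S' where "S' = {q\<in>S. c q \<noteq> 0}"
  define b where "b = Max (snd ` S')"
  define A where "A = (\<lambda>a. (a, b)) -` S'"
  define T where "T = {q\<in>S'. snd q < b}"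
  have "finite S'" "p \<in> S'"
    using assms by (auto simp: S'_def)
  have "b \<in> snd ` S'"
    unfolding b_def using \<open>finite S'\<close> \<open>p \<in> S'\<close> by (intro Max_in) auto
  have b_max: "snd q \<le> b" if "q \<in> S'" for q
    unfolding b_def using \<open>finite S'\<close> that by (intro Max_ge) auto
  have S'_split: "S' = (\<lambda>a. (a, b)) ` A \<union> T"
  proof (intro equalityI subsetI)
    fix q assume "q \<in> S'"
    then show "q \<in> (\<lambda>a. (a, b)) ` A \<union> T"
      using b_max[of q] by (cases q) (auto simp: A_def T_def)
  qed (auto simp: A_def T_def)
  have fin_A: "finite A"
    unfolding A_def using \<open>finite S'\<close> by (rule finite_vimageI) (simp add: inj_on_def)
  have A_ne: "A \<noteq> {}"
    using \<open>b \<in> snd ` S'\<close> by (auto simp: A_def)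
  have c_nz: "\<forall>a\<in>A. c (a, b) \<noteq> 0"
    by (auto simp: A_def S'_def)
  have fin_T: "finite T" and T_below: "\<forall>q\<in>T. snd q < b"
    using \<open>finite S'\<close> by (auto simp: T_def)
  have split: "(\<Sum>q\<in>S. c q * MT (fst q) (snd q) f x)
      = trig_poly (\<lambda>a. c (a, b)) A x * f (x - b) + (\<Sum>q\<in>T. c q * MT (fst q) (snd q) f x)" for x
  proof -
    have "(\<Sum>q\<in>S. c q * MT (fst q) (snd q) f x) = (\<Sum>q\<in>S'. c q * MT (fst q) (snd q) f x)"
      using \<open>finite S\<close> by (intro sum.mono_neutral_right) (auto simp: S'_def)
    also have "\<dots> = (\<Sum>q\<in>(\<lambda>a. (a, b)) ` A. c q * MT (fst q) (snd q) f x) + (\<Sum>q\<in>T. c q * MT (fst q) (snd q) f x)"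
      unfolding S'_split using fin_A fin_T by (intro sum.union_disjoint) (auto simp: T_def)
    also have "(\<Sum>q\<in>(\<lambda>a. (a, b)) ` A. c q * MT (fst q) (snd q) f x) = (\<Sum>a\<in>A. c (a, b) * MT a b f x)"
      by (simp add: sum.reindex inj_on_def)
    also have "\<dots> = trig_poly (\<lambda>a. c (a, b)) A x * f (x - b)"
      unfolding trig_poly_def sum_distrib_right by (simp add: MT_conv_cis mult.assoc)
    finally show ?thesis .
  qed
  have dom: "AE x in lebesgue. norm (trig_poly (\<lambda>a. c (a, b)) A x) * norm (f (x - b))
       \<le> (\<Sum>q\<in>T. norm (c q) * norm (f (x - snd q)))"
    using ae
  proof eventually_elim
    case (elim x)
    then have eq: "trig_poly (\<lambda>a. c (a, b)) A x * f (x - b) = - (\<Sum>q\<in>T. c q * MT (fst q) (snd q) f x)"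
      by (simp add: split eq_neg_iff_add_eq_0)
    have "norm (trig_poly (\<lambda>a. c (a, b)) A x) * norm (f (x - b)) = norm (\<Sum>q\<in>T. c q * MT (fst q) (snd q) f x)"
      using arg_cong[OF eq, of norm] by (simp add: norm_mult)
    also have "\<dots> \<le> (\<Sum>q\<in>T. norm (c q * MT (fst q) (snd q) f x))"
      by (rule norm_sum)
    also have "\<dots> = (\<Sum>q\<in>T. norm (c q) * norm (f (x - snd q)))"
      by (simp add: norm_mult MT_conv_cis)
    finally show ?case .
  qed
  show ?thesis
    by (rule that[OF fin_A A_ne c_nz fin_T T_below dom])
qed

theorem theorem3p4:
  fixes f :: "real \<Rightarrow> complex"
  assumes meas: "f \<in> borel_measurable lebesgue"
    and nonzero: "\<not> (AE x in lebesgue. f x = 0)"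
    and decay: "\<And>c. c > 0 \<Longrightarrow> ((\<lambda>x. norm (f x) * exp (c * x)) \<longlongrightarrow> 0) at_top"
    and quasi_mono: "\<And>b. b > 0 \<Longrightarrow> \<exists>C>0. \<forall>x>0. norm (f (x + b)) < C * norm (f x)"
  shows "gabor_lin_indep f"
  unfolding gabor_lin_indep_def
proof (intro allI impI ballI)
  fix S :: "(real \<times> real) set" and c :: "real \<times> real \<Rightarrow> complex" and p
  assume "finite S" "AE x in lebesgue. (\<Sum>p\<in>S. c p * MT (fst p) (snd p) f x) = 0" "p \<in> S"
  show "c p = 0"
  proof (rule ccontr)
    assume "c p \<noteq> 0"
    then obtain b A T where "finite A" "A \<noteq> {}" "\<forall>a\<in>A. c (a, b) \<noteq> 0" "finite T" "\<forall>q\<in>T. snd q < b"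
      "AE x in lebesgue. norm (trig_poly (\<lambda>a. c (a, b)) A x) * norm (f (x - b))
         \<le> (\<Sum>q\<in>T. norm (c q) * norm (f (x - snd q)))"
      by (rule gabor_combination_top_shift_bound[OF \<open>finite S\<close> \<open>AE x in lebesgue. _\<close> \<open>p \<in> S\<close>])
    then show False
      using trig_poly_top_shift_not_dominated[OF decay quasi_mono,
          where w = "\<lambda>a. c (a, b)" and \<beta> = snd and \<kappa> = "\<lambda>q. norm (c q)"]
      by blast
  qed
qed

end
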